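(* For every $\mu \in \mathcal{X}$ and every probability distribution $P_X$ on $\mathcal{X}$, $D(\mu ; P_X) \in [0, 2]$. Moreover, with $X_1, X_2 \sim P_X$ independent: (i) $D(\mu ; P_X) = 0$ if and only if $P_X(\{\mu\}) = 0$ and $P ( L[X_1, X_2, \mu] \cup L[X_2, X_1, \mu] ) = 1$; (ii) $D(\mu ; P_X) = 2$ if and only if $P_X(\{\mu\}) = 0$ and $P( L[X_1, \mu, X_2] ) = 1$.
   Context: $(\mathcal{X}, d)$ is a complete separable metric space with its Borel $\sigma$-algebra. Define $h: \mathcal{X}^3 \to \mathbb{R}$ by $h(x_1, x_2, x_3) := \mathbb{I}( x_3 \notin \{x_1, x_2\} ) \dfrac{ d^2(x_1, x_3) + d^2(x_2, x_3) - d^2(x_1, x_2) }{d(x_1, x_3)\, d(x_2, x_3) }$, where $h := 0$ when $x_3 \in \{x_1,x_2\}$. The metric spatial depth of $\mu \in \mathcal{X}$ with respect to a probability distribution $P_X$ on $\mathcal{X}$ is $D(\mu; P_X) := 1 - \frac{1}{2} \mathrm{E} \{ h(X_1, X_2, \mu) \}$, where $X_1, X_2 \sim P_X$ are independent. For $x_1,x_2,x_3\in\mathcal{X}$, $L[x_1, x_2, x_3]$ denotes the event (condition) that $d(x_1, x_3) = d(x_1, x_2) + d(x_2, x_3)$, i.e. the three points lie on a metric line with $x_2$ between $x_1$ and $x_3$. *)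

theory Defs
  imports "HOL-Probability.Probability"
begin

definition msd_h :: "'a::metric_space \<Rightarrow> 'a \<Rightarrow> 'a \<Rightarrow> real" where
  "msd_h x1 x2 x3 =
     (if x3 \<notin> {x1, x2}
      then ((dist x1 x3)\<^sup>2 + (dist x2 x3)\<^sup>2 - (dist x1 x2)\<^sup>2) / (dist x1 x3 * dist x2 x3)
      else 0)"

definition msd_depth :: "'a::metric_space \<Rightarrow> 'a measure \<Rightarrow> real" where
  "msd_depth \<mu> P = 1 - (1/2) * (\<integral>z. msd_h (fst z) (snd z) \<mu> \<partial>(P \<Otimes>\<^sub>M P))"

definition metric_line :: "'a::metric_space \<Rightarrow> 'a \<Rightarrow> 'a \<Rightarrow> bool" where
  "metric_line x1 x2 x3 \<longleftrightarrow> dist x1 x3 = dist x1 x2 + dist x2 x3"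

end

theory Submission
  imports Defs
begin

text \<open>Writing a = d(x,\<mu>), b = d(y,\<mu>), c = d(x,y), the kernel is (a^2 + b^2 - c^2)/(ab),
  i.e. twice the cosine of the comparison angle at \<mu>. The triangle inequality
  \<bar>a - b\<bar> \<le> c \<le> a + b puts it in [-2, 2], with the value 2 exactly when c = \<bar>a - b\<bar>
  (\<mu> is an endpoint of a metric line through x and y) and -2 exactly when c = a + b
  (\<mu> lies between x and y). Hence the depth 1 - E h/2 lies in [0, 2], and it attains an
  endpoint iff h is almost surely 2 resp. -2; since h vanishes when \<mu> is one of the
  sample points, this forces P{\<mu>} = 0 together with the corresponding collinearity
  holding almost surely.\<close>

lemma cosine_ratio_abs_le_2:
  fixes a b c :: real
  assumes "a > 0" "b > 0" "\<bar>a - b\<bar> \<le> c" "c \<le> a + b"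
  shows "\<bar>(a\<^sup>2 + b\<^sup>2 - c\<^sup>2) / (a * b)\<bar> \<le> 2"
proof -
  have "0 \<le> c"
    using abs_ge_zero assms(3) by (rule order_trans)
  then have "c\<^sup>2 \<le> (a + b)\<^sup>2" "\<bar>a - b\<bar>\<^sup>2 \<le> c\<^sup>2"
    using power_mono[OF assms(4)] power_mono[OF assms(3) abs_ge_zero] by blast+
  then have "\<bar>a\<^sup>2 + b\<^sup>2 - c\<^sup>2\<bar> \<le> 2 * (a * b)"
    unfolding power2_abs power2_sum power2_diff abs_le_iff by linarith
  with assms show ?thesis
    by (simp add: abs_divide divide_le_eq abs_mult)
qed

lemma cosine_ratio_eq_2_iff:
  fixes a b c :: real
  assumes "a > 0" "b > 0" "c \<ge> 0"
  shows "(a\<^sup>2 + b\<^sup>2 - c\<^sup>2) / (a * b) = 2 \<longleftrightarrow> c = \<bar>a - b\<bar>"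
proof -
  have "(a\<^sup>2 + b\<^sup>2 - c\<^sup>2) / (a * b) = 2 \<longleftrightarrow> a\<^sup>2 + b\<^sup>2 - c\<^sup>2 = 2 * (a * b)"
    using assms by (simp add: divide_eq_eq)
  also have "\<dots> \<longleftrightarrow> c\<^sup>2 = \<bar>a - b\<bar>\<^sup>2"
    unfolding power2_abs power2_diff by arith
  also have "\<dots> \<longleftrightarrow> c = \<bar>a - b\<bar>"
    using assms by (intro power2_eq_iff_nonneg) auto
  finally show ?thesis .
qed

lemma cosine_ratio_eq_minus_2_iff:
  fixes a b c :: real
  assumes "a > 0" "b > 0" "c \<ge> 0"
  shows "(a\<^sup>2 + b\<^sup>2 - c\<^sup>2) / (a * b) = -2 \<longleftrightarrow> c = a + b"
proof -
  have "(a\<^sup>2 + b\<^sup>2 - c\<^sup>2) / (a * b) = -2 \<longleftrightarrow> a\<^sup>2 + b\<^sup>2 - c\<^sup>2 = -2 * (a * b)"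
    using assms by (simp add: divide_eq_eq)
  also have "\<dots> \<longleftrightarrow> c\<^sup>2 = (a + b)\<^sup>2"
    unfolding power2_sum by arith
  also have "\<dots> \<longleftrightarrow> c = a + b"
    using assms by (intro power2_eq_iff_nonneg) auto
  finally show ?thesis .
qed

lemma msd_h_abs_le_2: "\<bar>msd_h x y \<mu>\<bar> \<le> 2"
proof (cases "\<mu> \<in> {x, y}")
  case False
  then have pos: "dist x \<mu> > 0" "dist y \<mu> > 0"
    by auto
  have "\<bar>dist x \<mu> - dist y \<mu>\<bar> \<le> dist x y" "dist x y \<le> dist x \<mu> + dist y \<mu>"
    using abs_dist_diff_le[of x \<mu> y] dist_triangle2[of x y \<mu>] by (simp_all add: dist_commute)
  with False show ?thesis
    using cosine_ratio_abs_le_2[OF pos] by (simp add: msd_h_def)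
qed (simp add: msd_h_def)

lemma msd_h_eq_2_iff:
  "msd_h x y \<mu> = 2 \<longleftrightarrow> x \<noteq> \<mu> \<and> y \<noteq> \<mu> \<and> (metric_line x y \<mu> \<or> metric_line y x \<mu>)"
proof (cases "\<mu> \<in> {x, y}")
  case False
  then have pos: "dist x \<mu> > 0" "dist y \<mu> > 0"
    by auto
  with False have "msd_h x y \<mu> = 2 \<longleftrightarrow> dist x y = \<bar>dist x \<mu> - dist y \<mu>\<bar>"
    using cosine_ratio_eq_2_iff[OF pos zero_le_dist] by (simp add: msd_h_def)
  also have "\<dots> \<longleftrightarrow> dist x \<mu> = dist x y + dist y \<mu> \<or> dist y \<mu> = dist x y + dist x \<mu>"
    using zero_le_dist[of x y] by arith
  finally show ?thesis
    using False by (auto simp: metric_line_def dist_commute[of y x])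
qed (auto simp: msd_h_def)

lemma msd_h_eq_minus_2_iff:
  "msd_h x y \<mu> = -2 \<longleftrightarrow> x \<noteq> \<mu> \<and> y \<noteq> \<mu> \<and> metric_line x \<mu> y"
proof (cases "\<mu> \<in> {x, y}")
  case False
  then have pos: "dist x \<mu> > 0" "dist y \<mu> > 0"
    by auto
  with False have "msd_h x y \<mu> = -2 \<longleftrightarrow> dist x y = dist x \<mu> + dist y \<mu>"
    using cosine_ratio_eq_minus_2_iff[OF pos zero_le_dist] by (simp add: msd_h_def)
  with False show ?thesis
    by (auto simp: metric_line_def dist_commute)
qed (auto simp: msd_h_def)

lemma borel_measurable_msd_h:
  "(\<lambda>z. msd_h (fst z) (snd z) \<mu>) \<in> borel_measurable (borel :: ('a::metric_space \<times> 'a) measure)"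
proof -
  have [measurable]:
      "(\<lambda>z. dist (fst z) \<mu>) \<in> borel_measurable borel"
      "(\<lambda>z. dist (snd z) \<mu>) \<in> borel_measurable borel"
      "(\<lambda>z. dist (fst z) (snd z)) \<in> borel_measurable (borel :: ('a \<times> 'a) measure)"
    by (intro borel_measurable_continuous_onI continuous_intros)+
  have "open {z :: 'a \<times> 'a. \<mu> \<noteq> fst z \<and> \<mu> \<noteq> snd z}"
    by (intro open_Collect_conj open_Collect_neq continuous_intros)
  then have [measurable]:
      "(\<lambda>z :: 'a \<times> 'a. \<mu> \<notin> {fst z, snd z}) \<in> measurable borel (count_space UNIV)"
    unfolding pred_def by (simp add: eq_commute)
  show ?thesis
    unfolding msd_h_def by measurable
qed

lemma integrable_msd_h:
  assumes "finite_measure M" "sets M = sets (borel :: ('a::metric_space \<times> 'a) measure)"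
  shows "integrable M (\<lambda>z. msd_h (fst z) (snd z) \<mu>)"
proof -
  interpret finite_measure M by fact
  show ?thesis
    using borel_measurable_msd_h msd_h_abs_le_2
    by (intro integrable_const_bound[where B = 2] AE_I2) (simp_all add: measurable_cong_sets[OF assms(2) refl])
qed

lemma sets_metric_line:
  "{z :: 'a::metric_space \<times> 'a. metric_line (fst z) (snd z) \<mu> \<or> metric_line (snd z) (fst z) \<mu>} \<in> sets borel"
  "{z :: 'a::metric_space \<times> 'a. metric_line (fst z) \<mu> (snd z)} \<in> sets borel"
proof -
  have "closed {z :: 'a \<times> 'a. metric_line (fst z) (snd z) \<mu>}"
    "closed {z :: 'a \<times> 'a. metric_line (snd z) (fst z) \<mu>}"
    "closed {z :: 'a \<times> 'a. metric_line (fst z) \<mu> (snd z)}"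
    unfolding metric_line_def by (intro closed_Collect_eq continuous_intros)+
  then show
    "{z :: 'a \<times> 'a. metric_line (fst z) (snd z) \<mu> \<or> metric_line (snd z) (fst z) \<mu>} \<in> sets borel"
    "{z :: 'a \<times> 'a. metric_line (fst z) \<mu> (snd z)} \<in> sets borel"
    by (simp_all add: closed_Collect_disj)
qed

lemma (in prob_space) integral_eq_upper_bound_iff_AE:
  fixes f :: "'a \<Rightarrow> real"
  assumes "integrable M f" "AE x in M. f x \<le> c"
  shows "(\<integral>x. f x \<partial>M) = c \<longleftrightarrow> (AE x in M. f x = c)"
proof -
  have "(\<integral>x. c - f x \<partial>M) = c - (\<integral>x. f x \<partial>M)"
    using assms(1) by (simp add: prob_space)
  moreover have "(\<integral>x. c - f x \<partial>M) = 0 \<longleftrightarrow> (AE x in M. f x = c)"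
    using assms by (subst integral_nonneg_eq_0_iff_AE) auto
  ultimately show ?thesis
    by auto
qed

lemma (in prob_space) integral_eq_lower_bound_iff_AE:
  fixes f :: "'a \<Rightarrow> real"
  assumes "integrable M f" "AE x in M. c \<le> f x"
  shows "(\<integral>x. f x \<partial>M) = c \<longleftrightarrow> (AE x in M. f x = c)"
  using integral_eq_upper_bound_iff_AE[of "\<lambda>x. - f x" "- c"] assms by auto

lemma (in pair_prob_space) AE_pair_avoid_iff:
  assumes "A \<in> sets M1" "B \<in> sets M2"
  shows "(AE z in M1 \<Otimes>\<^sub>M M2. fst z \<notin> A \<and> snd z \<notin> B) \<longleftrightarrow>
    measure M1 A = 0 \<and> measure M2 B = 0"
proof -
  note assms[measurable]
  have "(AE z in M1 \<Otimes>\<^sub>M M2. fst z \<notin> A \<and> snd z \<notin> B) \<longleftrightarrow>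
      (AE x in M1. AE y in M2. x \<notin> A \<and> y \<notin> B)"
    by (intro AE_pair_iff[symmetric]) measurable
  also have "\<dots> \<longleftrightarrow> (AE x in M1. x \<notin> A) \<and> (AE y in M2. y \<notin> B)"
    by (simp add: M2.AE_const)
  finally show ?thesis
    using assms by (simp add: M1.prob_eq_0 M2.prob_eq_0)
qed

theorem theorem3:
  fixes P :: "'a::polish_space measure" and \<mu> :: 'a
  assumes "prob_space P" and "sets P = sets borel"
  shows "msd_depth \<mu> P \<in> {0..2} \<and>
         (msd_depth \<mu> P = 0 \<longleftrightarrow>
           measure P {\<mu>} = 0 \<and>
           measure (P \<Otimes>\<^sub>M P)
             {z \<in> space (P \<Otimes>\<^sub>M P). metric_line (fst z) (snd z) \<mu> \<or> metric_line (snd z) (fst z) \<mu>} = 1) \<and>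
         (msd_depth \<mu> P = 2 \<longleftrightarrow>
           measure P {\<mu>} = 0 \<and>
           measure (P \<Otimes>\<^sub>M P)
             {z \<in> space (P \<Otimes>\<^sub>M P). metric_line (fst z) \<mu> (snd z)} = 1)"
proof -
  interpret P: prob_space P by fact
  interpret PP: pair_prob_space P P
    by (simp add: pair_prob_space_def pair_sigma_finite_def P.prob_space_axioms P.sigma_finite_measure_axioms)
  let ?h = "\<lambda>z. msd_h (fst z) (snd z) \<mu>"
  have sets_PP: "sets (P \<Otimes>\<^sub>M P) = sets borel"
    using sets_pair_measure_cong[OF assms(2) assms(2)] by (metis borel_prod)
  then have h_int: "integrable (P \<Otimes>\<^sub>M P) ?h"
    by (intro integrable_msd_h) unfold_locales
  have "-2 \<le> ?h z" "?h z \<le> 2" for z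
    using msd_h_abs_le_2[of "fst z" "snd z" \<mu>] by (auto simp: abs_le_iff)
  then have h_lower: "AE z in P \<Otimes>\<^sub>M P. -2 \<le> ?h z" and h_upper: "AE z in P \<Otimes>\<^sub>M P. ?h z \<le> 2"
    by simp_all
  define E where "E = (\<integral>z. ?h z \<partial>(P \<Otimes>\<^sub>M P))"
  have depth: "msd_depth \<mu> P = 1 - E / 2"
    by (simp add: msd_depth_def E_def)
  have "-2 \<le> E" "E \<le> 2"
    unfolding E_def using h_int h_lower h_upper by (auto intro: PP.integral_ge_const PP.integral_le_const)
  have avoid: "(AE z in P \<Otimes>\<^sub>M P. fst z \<noteq> \<mu> \<and> snd z \<noteq> \<mu>) \<longleftrightarrow> measure P {\<mu>} = 0"
    using PP.AE_pair_avoid_iff[of "{\<mu>}" "{\<mu>}"] assms(2) by simp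
  have prob_eq_1_iff_AE: "\<P>(z in P \<Otimes>\<^sub>M P. L z) = 1 \<longleftrightarrow> (AE z in P \<Otimes>\<^sub>M P. L z)"
    if "{z. L z} \<in> sets borel" for L
    using that sets_PP sets_eq_imp_space_eq[OF sets_PP] by (intro PP.prob_Collect_eq_1) simp
  have E_eq_2: "E = 2 \<longleftrightarrow> measure P {\<mu>} = 0 \<and>
      \<P>(z in P \<Otimes>\<^sub>M P. metric_line (fst z) (snd z) \<mu> \<or> metric_line (snd z) (fst z) \<mu>) = 1"
    unfolding E_def PP.integral_eq_upper_bound_iff_AE[OF h_int h_upper] msd_h_eq_2_iff
    using avoid prob_eq_1_iff_AE[OF sets_metric_line(1)] by (auto simp: AE_conj_iff)
  have E_eq_minus_2: "E = -2 \<longleftrightarrow> measure P {\<mu>} = 0 \<and>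
      \<P>(z in P \<Otimes>\<^sub>M P. metric_line (fst z) \<mu> (snd z)) = 1"
    unfolding E_def PP.integral_eq_lower_bound_iff_AE[OF h_int h_lower] msd_h_eq_minus_2_iff
    using avoid prob_eq_1_iff_AE[OF sets_metric_line(2)] by (auto simp: AE_conj_iff)
  show ?thesis
    using depth \<open>-2 \<le> E\<close> \<open>E \<le> 2\<close> E_eq_2 E_eq_minus_2 by auto
qed

end
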